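(* Let $p$ be an SCF that is rationalizable within the class of symmetric RUMs, and let $x,y\in X$. If $(x,y)\in T(R^s)$, then every symmetric RUM $(u,g)$ rationalizing $p$ satisfies $u(x)\geq u(y)$. If $(x,y)\in T_P(R^s)$, then every such model satisfies $u(x)>u(y)$.
   Context: $X$ is a finite set of options; $C=\{(x,y): x,y\in X,\ x\neq y\}$; $D\subseteq C$ is a fixed non-empty set with $(x,y)\in D\Rightarrow (y,x)\in D$. An SCF $p$ assigns to each $(x,y)\in D$ a number $p(x,y)>0$ with $p(x,y)+p(y,x)=1$. A RUM is a pair $(u,g)$ with $u:X\to\mathbb{R}$ and $g$ assigning to each $(x,y)\in C$ a density $g(x,y)$ on $\mathbb{R}$ (cdf $G(x,y)$) with $\int v\,g(x,y)(v)\,dv=u(x)-u(y)=:v(x,y)$, $g(x,y)(v)=g(y,x)(-v)$ for all $v$, and connected support. A RUM rationalizes $p$ if $G(x,y)(0)=p(y,x)$ for all $(x,y)\in D$. A RUM is symmetric if $g(x,y)(v(x,y)+\delta)=g(x,y)(v(x,y)-\delta)$ for all $(x,y)\in C$, $\delta\geq0$. The relation $R^s$ on $X$: $(x,y)\in R^s$ iff $x=y$, or $(x,y)\in D$ and $p(x,y)\geq p(y,x)$. For a binary relation $R$ on $X$, $T(R)$ is its transitive closure ($(x,y)\in T(R)$ iff there is a sequence $x_1=x,\dots,x_n=y$, $n\geq2$, with $(x_k,x_{k+1})\in R$ for all $k$), and $T_P(R)$ is the asymmetric part of $T(R)$: $(x,y)\in T(R)$ and $(y,x)\notin T(R)$.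 *)

theory Defs
  imports "HOL-Analysis.Analysis"
begin

definition pairs :: "'a set \<Rightarrow> ('a \<times> 'a) set" where
  "pairs X = {(x,y). x \<in> X \<and> y \<in> X \<and> x \<noteq> y}"

text \<open>Standing assumptions on X, D and the SCF p (p only matters on D).\<close>
definition is_SCF :: "'a set \<Rightarrow> ('a \<times> 'a) set \<Rightarrow> ('a \<Rightarrow> 'a \<Rightarrow> real) \<Rightarrow> bool" where
  "is_SCF X D p \<longleftrightarrow> finite X \<and> D \<noteq> {} \<and> D \<subseteq> pairs X \<and>
     (\<forall>x y. (x,y) \<in> D \<longrightarrow> (y,x) \<in> D) \<and>
     (\<forall>x y. (x,y) \<in> D \<longrightarrow> p x y > 0 \<and> p x y + p y x = 1)"

definition cdf_of :: "(real \<Rightarrow> real) \<Rightarrow> real \<Rightarrow> real" where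
  "cdf_of f t = (LINT v:{..t}|lborel. f v)"

text \<open>A density on the reals with finite mean m and connected support
  (support read as the set where the density is positive).\<close>
definition density_with_mean :: "(real \<Rightarrow> real) \<Rightarrow> real \<Rightarrow> bool" where
  "density_with_mean f m \<longleftrightarrow> f \<in> borel_measurable borel \<and> (\<forall>v. f v \<ge> 0) \<and>
     integrable lborel f \<and> (\<integral>v. f v \<partial>lborel) = 1 \<and>
     integrable lborel (\<lambda>v. v * f v) \<and> (\<integral>v. v * f v \<partial>lborel) = m \<and>
     is_interval {v. f v > 0}"

definition is_RUM :: "'a set \<Rightarrow> ('a \<Rightarrow> real) \<Rightarrow> ('a \<Rightarrow> 'a \<Rightarrow> real \<Rightarrow> real) \<Rightarrow> bool" where
  "is_RUM X u g \<longleftrightarrow> (\<forall>(x,y) \<in> pairs X.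
      density_with_mean (g x y) (u x - u y) \<and> (\<forall>v. g x y v = g y x (- v)))"

definition symmetric_RUM :: "'a set \<Rightarrow> ('a \<Rightarrow> real) \<Rightarrow> ('a \<Rightarrow> 'a \<Rightarrow> real \<Rightarrow> real) \<Rightarrow> bool" where
  "symmetric_RUM X u g \<longleftrightarrow> is_RUM X u g \<and> (\<forall>(x,y) \<in> pairs X. \<forall>\<delta>\<ge>0.
      g x y (u x - u y + \<delta>) = g x y (u x - u y - \<delta>))"

definition rationalizes :: "('a \<times> 'a) set \<Rightarrow> ('a \<Rightarrow> 'a \<Rightarrow> real) \<Rightarrow> ('a \<Rightarrow> real) \<Rightarrow> ('a \<Rightarrow> 'a \<Rightarrow> real \<Rightarrow> real) \<Rightarrow> bool" where
  "rationalizes D p u g \<longleftrightarrow> (\<forall>(x,y) \<in> D. cdf_of (g x y) 0 = p y x)"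

definition Rs :: "'a set \<Rightarrow> ('a \<times> 'a) set \<Rightarrow> ('a \<Rightarrow> 'a \<Rightarrow> real) \<Rightarrow> ('a \<times> 'a) set" where
  "Rs X D p = {(x,y). x \<in> X \<and> y \<in> X \<and> (x = y \<or> ((x,y) \<in> D \<and> p x y \<ge> p y x))}"

definition TP :: "('a \<times> 'a) set \<Rightarrow> ('a \<times> 'a) set" where
  "TP R = {(x,y). (x,y) \<in> R\<^sup>+ \<and> (y,x) \<notin> R\<^sup>+}"

end

theory Submission
  imports Defs
begin

text \<open>A density symmetric about m gives mass 1/2 to each side of m; if its support is an
  interval, the support contains a neighbourhood of m, so the cdf is strictly increasing around m.
  Hence for a symmetric RUM, G(x,y)(0) \<le> 1/2 holds exactly when u(x) \<ge> u(y): every R^s-step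
  weakly decreases utility, and an R^s-step that does not strictly decrease it can be reversed.
  So utility is non-increasing along R^s-chains, and if it does not drop from x to y then every
  step of the chain is level, hence reversible, and (y,x) lies in T(R^s) as well.\<close>

lemma cdf_of_eq_integral_indicator: "cdf_of f t = (\<integral>v. indicator {..t} v * f v \<partial>lborel)"
  unfolding cdf_of_def set_lebesgue_integral_def by simp

lemma integrable_indicator_mult:
  fixes f :: "real \<Rightarrow> real"
  assumes "integrable lborel f" and "A \<in> sets borel"
  shows "integrable lborel (\<lambda>v. indicator A v * f v)"
  using integrable_real_mult_indicator[of A lborel f] assms by (simp add: mult.commute)

lemma cdf_of_mono:
  fixes f :: "real \<Rightarrow> real"
  assumes "integrable lborel f" and "\<forall>v. f v \<ge> 0" and "s \<le> t"
  shows "cdf_of f s \<le> cdf_of f t"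
  unfolding cdf_of_eq_integral_indicator using assms
  by (intro integral_mono integrable_indicator_mult) (auto split: split_indicator)

lemma integral_indicator_greaterThanLessThan_pos:
  fixes f :: "real \<Rightarrow> real"
  assumes [measurable]: "f \<in> borel_measurable borel" and int: "integrable lborel f"
    and nonneg: "\<forall>v. f v \<ge> 0" and "s < t" and pos: "\<forall>v \<in> {s<..<t}. f v > 0"
  shows "(\<integral>v. indicator {s<..<t} v * f v \<partial>lborel) > 0"
proof -
  have int_st: "integrable lborel (\<lambda>v. indicator {s<..<t} v * f v)"
    using int by (rule integrable_indicator_mult) simp
  have "(\<integral>v. indicator {s<..<t} v * f v \<partial>lborel) \<ge> 0"
    using nonneg by (intro Bochner_Integration.integral_nonneg) (auto split: split_indicator)
  moreover have "(\<integral>v. indicator {s<..<t} v * f v \<partial>lborel) \<noteq> 0"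
  proof
    assume "(\<integral>v. indicator {s<..<t} v * f v \<partial>lborel) = 0"
    then have "AE v in lborel. indicator {s<..<t} v * f v = 0"
      using integral_nonneg_eq_0_iff_AE[OF int_st] nonneg by (auto split: split_indicator)
    then have "AE v in lborel. v \<notin> {s<..<t}"
      by (rule eventually_mono) (use pos in \<open>fastforce split: split_indicator\<close>)
    then have "emeasure lborel {s<..<t} = 0"
      by (subst (asm) AE_iff_measurable[of "{s<..<t}"]) auto
    with \<open>s < t\<close> show False by simp
  qed
  ultimately show ?thesis by linarith
qed

lemma cdf_of_strict_mono:
  fixes f :: "real \<Rightarrow> real"
  assumes [measurable]: "f \<in> borel_measurable borel" and int: "integrable lborel f"
    and nonneg: "\<forall>v. f v \<ge> 0" and "s < t" and "\<forall>v \<in> {s<..<t}. f v > 0"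
  shows "cdf_of f s < cdf_of f t"
proof -
  have "cdf_of f s < cdf_of f s + (\<integral>v. indicator {s<..<t} v * f v \<partial>lborel)"
    using integral_indicator_greaterThanLessThan_pos[OF assms] by simp
  also have "\<dots> = (\<integral>v. indicator {..s} v * f v + indicator {s<..<t} v * f v \<partial>lborel)"
    unfolding cdf_of_eq_integral_indicator using int
    by (intro Bochner_Integration.integral_add[symmetric] integrable_indicator_mult) auto
  also have "\<dots> \<le> cdf_of f t"
    unfolding cdf_of_eq_integral_indicator using int nonneg \<open>s < t\<close>
    by (intro integral_mono Bochner_Integration.integrable_add integrable_indicator_mult)
      (auto split: split_indicator)
  finally show ?thesis .
qed

lemma symmetric_about_reflect:
  fixes f :: "real \<Rightarrow> real"
  assumes "\<forall>\<delta>\<ge>0. f (m + \<delta>) = f (m - \<delta>)"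
  shows "f (2 * m - v) = f v"
  using assms[rule_format, of "v - m"] assms[rule_format, of "m - v"]
  by (cases "v \<ge> m") simp_all

lemma cdf_of_symmetric_center:
  fixes f :: "real \<Rightarrow> real"
  assumes [measurable]: "f \<in> borel_measurable borel" and int: "integrable lborel f"
    and total: "(\<integral>v. f v \<partial>lborel) = 1" and sym: "\<forall>\<delta>\<ge>0. f (m + \<delta>) = f (m - \<delta>)"
  shows "cdf_of f m = 1/2"
proof -
  have "cdf_of f m = abs (- 1) *\<^sub>R
      (\<integral>v. indicator {..m} (2 * m + (- 1) * v) * f (2 * m + (- 1) * v) \<partial>lborel)"
    unfolding cdf_of_eq_integral_indicator by (rule lborel_integral_real_affine) simp
  also have "\<dots> = (\<integral>v. indicator {m..} v * f v \<partial>lborel)"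
    using symmetric_about_reflect[OF sym]
    by (simp, intro Bochner_Integration.integral_cong) (auto split: split_indicator)
  also have "\<dots> = (\<integral>v. indicator {m<..} v * f v \<partial>lborel)"
    by (rule integral_cong_AE)
      (use AE_lborel_singleton[of m] in \<open>auto elim!: eventually_mono split: split_indicator\<close>)
  finally have right: "cdf_of f m = (\<integral>v. indicator {m<..} v * f v \<partial>lborel)" .
  have "cdf_of f m + (\<integral>v. indicator {m<..} v * f v \<partial>lborel)
      = (\<integral>v. indicator {..m} v * f v + indicator {m<..} v * f v \<partial>lborel)"
    unfolding cdf_of_eq_integral_indicator using int
    by (intro Bochner_Integration.integral_add[symmetric] integrable_indicator_mult) auto
  also have "\<dots> = (\<integral>v. f v \<partial>lborel)"
    by (intro Bochner_Integration.integral_cong) (auto split: split_indicator)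
  also have "\<dots> = 1"
    by (fact total)
  finally show ?thesis using right by simp
qed

lemma symmetric_density_pos_near_center:
  fixes f :: "real \<Rightarrow> real"
  assumes [measurable]: "f \<in> borel_measurable borel" and nonneg: "\<forall>v. f v \<ge> 0"
    and total: "(\<integral>v. f v \<partial>lborel) = 1" and support: "is_interval {v. f v > 0}"
    and sym: "\<forall>\<delta>\<ge>0. f (m + \<delta>) = f (m - \<delta>)"
  obtains e where "e > 0" and "\<forall>v. \<bar>v - m\<bar> < e \<longrightarrow> f v > 0"
proof -
  obtain a where "a \<noteq> m" and "f a > 0"
  proof (rule ccontr)
    assume "\<not> thesis"
    with that nonneg have "\<forall>v. v \<noteq> m \<longrightarrow> f v = 0" by (metis less_eq_real_def)
    then have "(\<integral>v. f v \<partial>lborel) = (\<integral>v. (0::real) \<partial>(lborel::real measure))"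
      by (intro integral_cong_AE)
        (use AE_lborel_singleton[of m] in \<open>auto elim!: eventually_mono\<close>)
    with total show False by simp
  qed
  have "f (2 * m - a) > 0"
    using \<open>f a > 0\<close> symmetric_about_reflect[OF sym] by simp
  have "f v > 0" if "\<bar>v - m\<bar> < \<bar>a - m\<bar>" for v
  proof -
    have "a \<le> v \<and> v \<le> 2 * m - a \<or> 2 * m - a \<le> v \<and> v \<le> a"
      using that by (cases "a < m") auto
    with \<open>f a > 0\<close> \<open>f (2 * m - a) > 0\<close> show ?thesis
      using support unfolding is_interval_1 by blast
  qed
  with \<open>a \<noteq> m\<close> show ?thesis by (intro that[of "\<bar>a - m\<bar>"]) simp_all
qed

lemma symmetric_density_cdf_zero_le_half_iff:
  fixes f :: "real \<Rightarrow> real"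
  assumes "density_with_mean f m" and sym: "\<forall>\<delta>\<ge>0. f (m + \<delta>) = f (m - \<delta>)"
  shows "cdf_of f 0 \<le> 1/2 \<longleftrightarrow> 0 \<le> m"
proof -
  have borel[measurable]: "f \<in> borel_measurable borel" and nonneg: "\<forall>v. f v \<ge> 0"
    and int: "integrable lborel f" and total: "(\<integral>v. f v \<partial>lborel) = 1"
    and support: "is_interval {v. f v > 0}"
    using assms(1) unfolding density_with_mean_def by auto
  have center: "cdf_of f m = 1/2"
    by (rule cdf_of_symmetric_center[OF borel int total sym])
  show ?thesis
  proof
    assume "0 \<le> m"
    then show "cdf_of f 0 \<le> 1/2"
      using cdf_of_mono[OF int nonneg] center by metis
  next
    assume "cdf_of f 0 \<le> 1/2"
    show "0 \<le> m"
    proof (rule ccontr)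
      assume "\<not> 0 \<le> m"
      obtain e where "e > 0" and pos: "\<forall>v. \<bar>v - m\<bar> < e \<longrightarrow> f v > 0"
        using symmetric_density_pos_near_center[OF borel nonneg total support sym] by auto
      define c where "c = min 0 (m + e)"
      have "m < c" and "c \<le> 0"
        using \<open>e > 0\<close> \<open>\<not> 0 \<le> m\<close> unfolding c_def by auto
      have "cdf_of f m < cdf_of f c"
        using \<open>m < c\<close> pos by (intro cdf_of_strict_mono int nonneg) (auto simp: c_def)
      also have "\<dots> \<le> cdf_of f 0"
        using \<open>c \<le> 0\<close> by (rule cdf_of_mono[OF int nonneg])
      finally show False
        using center \<open>cdf_of f 0 \<le> 1/2\<close> by simp
    qed
  qed
qed

lemma trancl_subset_antitone:
  fixes f :: "'a \<Rightarrow> 'b::preorder"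
  assumes "R \<subseteq> {(a, b). f b \<le> f a}"
  shows "R\<^sup>+ \<subseteq> {(a, b). f b \<le> f a}"
proof -
  have "trans {(a, b). f b \<le> f a}"
    by (auto intro: transI order_trans)
  with trancl_mono_subset[OF assms] show ?thesis by simp
qed

lemma trancl_converse_if_le:
  fixes f :: "'a \<Rightarrow> 'b::linorder"
  assumes antitone: "R \<subseteq> {(a, b). f b \<le> f a}"
    and reversible: "\<And>a b. (a, b) \<in> R \<Longrightarrow> f a \<le> f b \<Longrightarrow> (b, a) \<in> R"
    and "(a, b) \<in> R\<^sup>+" and "f a \<le> f b"
  shows "(b, a) \<in> R\<^sup>+"
  using assms(3,4)
proof (induction rule: trancl_induct)
  case (base b)
  then show ?case using reversible by blast
next
  case (step b c)
  have "f b \<le> f a" using trancl_subset_antitone[OF antitone] step.hyps(1) by blast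
  moreover have "f c \<le> f b" using antitone step.hyps(2) by blast
  ultimately have "f a \<le> f b" and "f b \<le> f c" using step.prems by simp_all
  then have "(b, a) \<in> R\<^sup>+" and "(c, b) \<in> R"
    using step.IH reversible[OF step.hyps(2)] by simp_all
  then show ?case by simp
qed

lemma TP_less_if_antitone:
  fixes f :: "'a \<Rightarrow> 'b::linorder"
  assumes "R \<subseteq> {(a, b). f b \<le> f a}"
    and "\<And>a b. (a, b) \<in> R \<Longrightarrow> f a \<le> f b \<Longrightarrow> (b, a) \<in> R"
    and "(x, y) \<in> TP R"
  shows "f y < f x"
  using assms(3) trancl_converse_if_le[OF assms(1,2), of x y] unfolding TP_def
  by (auto simp: not_le[symmetric])

lemma symmetric_RUM_prefers_iff_utility:
  assumes "is_SCF X D p" and "symmetric_RUM X u g" and "rationalizes D p u g"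
    and "(a, b) \<in> D"
  shows "p b a \<le> p a b \<longleftrightarrow> u b \<le> u a"
proof -
  have "(a, b) \<in> pairs X" and "p a b + p b a = 1"
    using assms(1,4) unfolding is_SCF_def by auto
  then have "density_with_mean (g a b) (u a - u b)"
    and "\<forall>\<delta>\<ge>0. g a b (u a - u b + \<delta>) = g a b (u a - u b - \<delta>)"
    using assms(2) unfolding symmetric_RUM_def is_RUM_def by auto
  from symmetric_density_cdf_zero_le_half_iff[OF this]
  have "p b a \<le> 1/2 \<longleftrightarrow> u b \<le> u a"
    using assms(3,4) unfolding rationalizes_def by auto
  with \<open>p a b + p b a = 1\<close> show ?thesis by auto
qed

lemma Rs_subset_utility_order:
  assumes "is_SCF X D p" and "symmetric_RUM X u g" and "rationalizes D p u g"
  shows "Rs X D p \<subseteq> {(a, b). u b \<le> u a}"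
  using symmetric_RUM_prefers_iff_utility[OF assms] unfolding Rs_def by auto

lemma Rs_converse_if_utility_le:
  assumes "is_SCF X D p" and "symmetric_RUM X u g" and "rationalizes D p u g"
    and "(a, b) \<in> Rs X D p" and "u a \<le> u b"
  shows "(b, a) \<in> Rs X D p"
proof -
  have "\<And>x y. (x, y) \<in> D \<Longrightarrow> (y, x) \<in> D"
    using assms(1) unfolding is_SCF_def by auto
  then show ?thesis
    using assms(4,5) symmetric_RUM_prefers_iff_utility[OF assms(1-3), of b a]
    unfolding Rs_def by auto
qed

theorem corollary3:
  fixes X :: "'a set" and D :: "('a \<times> 'a) set" and p :: "'a \<Rightarrow> 'a \<Rightarrow> real"
    and x y :: 'a
  assumes "is_SCF X D p"
    and "\<exists>u g. symmetric_RUM X u g \<and> rationalizes D p u g"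
    and "x \<in> X" and "y \<in> X"
  shows "((x,y) \<in> (Rs X D p)\<^sup>+ \<longrightarrow>
            (\<forall>u g. symmetric_RUM X u g \<and> rationalizes D p u g \<longrightarrow> u x \<ge> u y))
       \<and> ((x,y) \<in> TP (Rs X D p) \<longrightarrow>
            (\<forall>u g. symmetric_RUM X u g \<and> rationalizes D p u g \<longrightarrow> u x > u y))"
proof -
  have antitone: "Rs X D p \<subseteq> {(a, b). u b \<le> u a}"
    and reversible: "\<And>a b. (a, b) \<in> Rs X D p \<Longrightarrow> u a \<le> u b \<Longrightarrow> (b, a) \<in> Rs X D p"
    if "symmetric_RUM X u g" and "rationalizes D p u g" for u g
    using Rs_subset_utility_order[OF assms(1) that] Rs_converse_if_utility_le[OF assms(1) that]
    by blast+
  show ?thesis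
  proof (intro conjI impI allI; elim conjE)
    fix u g
    assume "(x, y) \<in> (Rs X D p)\<^sup>+" and model: "symmetric_RUM X u g" "rationalizes D p u g"
    then show "u y \<le> u x"
      using trancl_subset_antitone[OF antitone[OF model]] by blast
  next
    fix u g
    assume tp: "(x, y) \<in> TP (Rs X D p)" and model: "symmetric_RUM X u g" "rationalizes D p u g"
    show "u y < u x"
      using TP_less_if_antitone[OF antitone[OF model] reversible[OF model] tp] .
  qed
qed

end
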